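(* Let $Y$ be a random simplicial complex on $[n]=\{0,\dots,n\}$ drawn from the lower model in the medial regime, with constants $0<p\le P<1$ such that $p\le p_\sigma\le P$ for all $\sigma$. Let $\mathcal U$ be the cover of $Y$ by the closed stars of its vertices. Then for any constant $0<\alpha<1$, asymptotically almost surely the nerve complex $\mathcal N(\mathcal U)$ contains the full $\lfloor\alpha\log_{(p^{-1})}n\rfloor$-dimensional skeleton of the simplex spanned by the vertex set of $Y$; in particular $\mathcal N(\mathcal U)$ is $\big(\lfloor\alpha\log_{(p^{-1})}n\rfloor-1\big)$-connected, asymptotically almost surely.
   Context: Lower model: each non-empty proper subset $\sigma\subsetneq[n]$ is included independently with probability $p_\sigma$ into a random hypergraph $X$, and $Y$ is the largest simplicial complex contained in $X$. Medial regime: $p,P\in(0,1)$ are independent of $n$. The closed star $\mathrm{St}(v)$ of a vertex $v$ is the union of all closed simplexes of $Y$ containing $v$. The nerve $\mathcal N(\mathcal U)$ has the vertices of $Y$ as vertices, and a set $S$ of vertices spans a simplex iff $\bigcap_{v\in S}\mathrm{St}(v)\neq\emptyset$. Asymptotically almost surely means with probability tending to $1$ as $n\to\infty$. *)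

theory Defs
  imports "HOL-Probability.Product_PMF"
begin

definition cand_faces :: "nat \<Rightarrow> nat set set" where
  "cand_faces n = {\<sigma>. \<sigma> \<subseteq> {0..n} \<and> \<sigma> \<noteq> {} \<and> \<sigma> \<noteq> {0..n}}"

definition lower_hypergraph :: "nat \<Rightarrow> (nat set \<Rightarrow> real) \<Rightarrow> nat set set pmf" where
  "lower_hypergraph n ps =
     map_pmf (\<lambda>f. {\<sigma> \<in> cand_faces n. f \<sigma>})
       (Pi_pmf (cand_faces n) False (\<lambda>\<sigma>. bernoulli_pmf (ps \<sigma>)))"

definition largest_complex :: "'a set set \<Rightarrow> 'a set set" where
  "largest_complex X = {\<sigma>. \<sigma> \<noteq> {} \<and> (\<forall>\<tau>. \<tau> \<subseteq> \<sigma> \<and> \<tau> \<noteq> {} \<longrightarrow> \<tau> \<in> X)}"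

definition vertices :: "'a set set \<Rightarrow> 'a set" where
  "vertices Y = {v. {v} \<in> Y}"

text \<open>Closed star of v, described by the (open) simplices of Y it contains:
  a point in the relative interior of tau lies in St(v) iff tau is a face of a simplex
  containing v, i.e. tau \<union> {v} is a simplex of Y.\<close>
definition closed_star :: "'a set set \<Rightarrow> 'a \<Rightarrow> 'a set set" where
  "closed_star Y v = {\<tau> \<in> Y. \<tau> \<union> {v} \<in> Y}"

definition star_nerve :: "'a set set \<Rightarrow> 'a set set" where
  "star_nerve Y = {S. S \<noteq> {} \<and> finite S \<and> S \<subseteq> vertices Y \<and>
                      (\<Inter>v\<in>S. closed_star Y v) \<noteq> {}}"

end

(*
  If some vertex w is joined to every vertex of S (the faces {w} and {v, w}, v in S, are all
  present), then the vertex w lies in every closed star St(v), v in S, so S spans a simplex of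
  the nerve. For a fixed S with |S| <= k + 1 the events "w is joined to S", w not in S, involve
  pairwise disjoint sets of faces and are therefore independent, each of probability at least
  p^(k+2); so S fails with probability at most (1 - p^(k+2))^(n-k). A union bound over the at
  most (k+2)(n+1)^(k+1) candidate sets S bounds the failure probability by
  (k+2)(n+1)^(k+1) exp(-p^(k+2)(n-k)). For k <= alpha log_(1/p) n we have p^k >= n^(-alpha),
  so the exponent is of order n^(1-alpha), which beats the factor exp(O(log^2 n)).
*)
theory Submission
  imports Defs "HOL-Real_Asymp.Real_Asymp"
begin

lemma Pi_pmf_prob_Inter_local_events:
  fixes E :: "'i \<Rightarrow> ('a \<Rightarrow> 'b::countable) set"
  assumes "finite A" "finite W" "\<And>w. w \<in> W \<Longrightarrow> B w \<subseteq> A" "disjoint_family_on B W"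
    and local: "\<And>w f g. w \<in> W \<Longrightarrow> (\<And>x. x \<in> B w \<Longrightarrow> f x = g x) \<Longrightarrow> f \<in> E w \<longleftrightarrow> g \<in> E w"
  shows "measure_pmf.prob (Pi_pmf A d p) (\<Inter>w\<in>W. E w)
           = (\<Prod>w\<in>W. measure_pmf.prob (Pi_pmf A d p) (E w))"
proof (cases "W = {}")
  case False
  let ?M = "measure_pmf (Pi_pmf A d p)"
  let ?R = "\<lambda>w f. restrict f (B w)"
  have indep: "prob_space.indep_vars ?M (\<lambda>w. PiM (B w) (\<lambda>_. count_space UNIV)) ?R W"
    using prob_space.indep_vars_restrict[OF measure_pmf.prob_space_axioms
        indep_vars_Pi_pmf[OF assms(1)] assms(3,4)] by simp
  have E_eq: "E w = ?R w -` (?R w ` E w)" if "w \<in> W" for w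
  proof (intro subset_antisym subsetI)
    fix f assume "f \<in> ?R w -` (?R w ` E w)"
    then obtain g where "g \<in> E w" "restrict f (B w) = restrict g (B w)" by auto
    then show "f \<in> E w" using local[OF that, of f g] by (metis restrict_apply')
  qed auto
  have measurable: "?R w ` E w \<in> sets (PiM (B w) (\<lambda>_. count_space UNIV))" if "w \<in> W" for w
  proof -
    have "finite (B w)" using assms(1,3) that by (meson finite_subset)
    then show ?thesis by (subst count_space_PiM_finite) auto
  qed
  have "measure_pmf.prob (Pi_pmf A d p) (\<Inter>w\<in>W. ?R w -` (?R w ` E w) \<inter> space ?M)
      = (\<Prod>w\<in>W. measure_pmf.prob (Pi_pmf A d p) (?R w -` (?R w ` E w) \<inter> space ?M))"
    by (rule prob_space.indep_varsD_finite[OF measure_pmf.prob_space_axioms indep False assms(2)])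
      (rule measurable)
  then show ?thesis using E_eq by (simp cong: INF_cong prod.cong)
qed simp

lemma Pi_pmf_bernoulli_prob_all:
  assumes "finite A" "B \<subseteq> A" "\<And>x. x \<in> A \<Longrightarrow> 0 \<le> q x \<and> q x \<le> 1"
  shows "measure_pmf.prob (Pi_pmf A False (\<lambda>x. bernoulli_pmf (q x))) {f. \<forall>x\<in>B. f x}
           = (\<Prod>x\<in>B. q x)"
proof -
  have "{f. \<forall>x\<in>B. f x} = Pi A (\<lambda>x. if x \<in> B then {True} else UNIV)"
    using assms(2) by (auto simp: Pi_def)
  then have "measure_pmf.prob (Pi_pmf A False (\<lambda>x. bernoulli_pmf (q x))) {f. \<forall>x\<in>B. f x}
      = (\<Prod>x\<in>A. measure_pmf.prob (bernoulli_pmf (q x)) (if x \<in> B then {True} else UNIV))"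
    using measure_Pi_pmf_Pi[OF assms(1)] by simp
  also have "\<dots> = (\<Prod>x\<in>A. if x \<in> B then q x else 1)"
    by (intro prod.cong refl) (use assms(3) in \<open>auto simp: measure_pmf_single\<close>)
  also have "\<dots> = (\<Prod>x\<in>B. q x)"
    using assms(1,2) by (simp add: prod.If_cases Int_absorb1)
  finally show ?thesis .
qed

lemma card_subsets_card_le:
  assumes "finite V" "V \<noteq> {}"
  shows "card {S. S \<subseteq> V \<and> card S \<le> m} \<le> (m + 1) * card V ^ m"
proof -
  have "{S. S \<subseteq> V \<and> card S \<le> m} = (\<Union>i\<in>{..m}. {S. S \<subseteq> V \<and> card S = i})"
    by auto
  then have "card {S. S \<subseteq> V \<and> card S \<le> m} \<le> (\<Sum>i\<in>{..m}. card {S. S \<subseteq> V \<and> card S = i})"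
    by (simp add: card_UN_le)
  also have "\<dots> = (\<Sum>i\<in>{..m}. card V choose i)"
    using assms(1) by (simp add: n_subsets)
  also have "\<dots> \<le> (\<Sum>i\<in>{..m}. card V ^ m)"
  proof (rule sum_mono)
    fix i assume "i \<in> {..m}"
    have "card V choose i \<le> card V ^ i"
      by (cases "i \<le> card V") (auto simp: binomial_le_pow binomial_eq_0)
    also have "\<dots> \<le> card V ^ m"
      using \<open>i \<in> {..m}\<close> assms by (intro power_increasing) (auto simp: card_gt_0_iff Suc_leI)
    finally show "card V choose i \<le> card V ^ m" .
  qed
  finally show ?thesis by simp
qed

lemma vertices_largest_complex: "vertices (largest_complex X) = {v. {v} \<in> X}"
  by (auto simp: vertices_def largest_complex_def subset_singleton_iff)

lemma edge_in_largest_complex: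
  assumes "{v} \<in> X" "{w} \<in> X" "{v, w} \<in> X"
  shows "{v, w} \<in> largest_complex X"
proof -
  have "\<tau> = {v} \<or> \<tau> = {w} \<or> \<tau> = {v, w}" if "\<tau> \<subseteq> {v, w}" "\<tau> \<noteq> {}" for \<tau> :: "'a set"
    using that by blast
  then show ?thesis using assms unfolding largest_complex_def by blast
qed

definition cone_faces :: "'a set \<Rightarrow> 'a \<Rightarrow> 'a set set" where
  "cone_faces S w = insert {w} ((\<lambda>v. {v, w}) ` S)"

lemma cone_in_star_nerve:
  assumes "finite S" "S \<noteq> {}" "S \<subseteq> vertices (largest_complex X)" "cone_faces S w \<subseteq> X"
  shows "S \<in> star_nerve (largest_complex X)"
proof -
  let ?Y = "largest_complex X"
  have "{w} \<in> ?Y"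
    using assms(4) by (auto simp: cone_faces_def largest_complex_def subset_singleton_iff)
  moreover have "{w} \<union> {v} \<in> ?Y" if "v \<in> S" for v
    using edge_in_largest_complex[of w X v] assms(3,4) that
    by (auto simp: vertices_largest_complex cone_faces_def insert_commute)
  ultimately have "{w} \<in> (\<Inter>v\<in>S. closed_star ?Y v)" by (simp add: closed_star_def)
  then have "(\<Inter>v\<in>S. closed_star ?Y v) \<noteq> {}" by blast
  then show ?thesis using assms(1-3) by (simp add: star_nerve_def)
qed

lemma card_cone_faces_le:
  assumes "finite S"
  shows "card (cone_faces S w) \<le> card S + 1"
proof -
  have "card (cone_faces S w) \<le> card ((\<lambda>v. {v, w}) ` S) + 1"
    using assms by (simp add: cone_faces_def card_insert_if)
  also have "\<dots> \<le> card S + 1" using assms by (simp add: card_image_le)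
  finally show ?thesis .
qed

lemma disjoint_family_cone_faces: "disjoint_family_on (cone_faces S) (- S)"
  unfolding disjoint_family_on_def cone_faces_def by (auto simp: doubleton_eq_iff)

lemma singleton_in_cand_faces: "0 < n \<Longrightarrow> v \<le> n \<Longrightarrow> {v} \<in> cand_faces n"
  by (auto simp: cand_faces_def dest: arg_cong[of _ _ card])

lemma cone_faces_subset_cand_faces:
  assumes "2 \<le> n" "S \<subseteq> {0..n}" "w \<le> n"
  shows "cone_faces S w \<subseteq> cand_faces n"
proof
  fix \<sigma> assume "\<sigma> \<in> cone_faces S w"
  then obtain v where v: "v \<le> n" and \<sigma>: "\<sigma> = {w} \<or> \<sigma> = {v, w}"
    using assms(2,3) unfolding cone_faces_def by auto
  have "card \<sigma> \<le> 2" using \<sigma> by (auto simp: card_insert_if)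
  then have "\<sigma> \<noteq> {0..n}" using assms(1) by auto
  then show "\<sigma> \<in> cand_faces n" using \<sigma> v assms(3) unfolding cand_faces_def by auto
qed

lemma star_nerve_contains_skeleton_if_cones:
  assumes "X \<subseteq> cand_faces n"
    and cones: "\<And>S. S \<subseteq> {0..n} \<Longrightarrow> card S \<le> k + 1 \<Longrightarrow> \<exists>w. cone_faces S w \<subseteq> X"
  shows "\<forall>S. S \<noteq> {} \<and> S \<subseteq> vertices (largest_complex X) \<and> card S \<le> k + 1
           \<longrightarrow> S \<in> star_nerve (largest_complex X)"
proof (intro allI impI, elim conjE)
  fix S assume S: "S \<noteq> {}" "S \<subseteq> vertices (largest_complex X)" "card S \<le> k + 1"
  then have "S \<subseteq> {0..n}"
    using assms(1) by (auto simp: vertices_largest_complex cand_faces_def)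
  then obtain w where "cone_faces S w \<subseteq> X" using cones S(3) by blast
  moreover have "finite S" using \<open>S \<subseteq> {0..n}\<close> finite_subset by blast
  ultimately show "S \<in> star_nerve (largest_complex X)" using S(1,2) by (intro cone_in_star_nerve)
qed

lemma prob_no_common_neighbour_le:
  fixes q :: "nat set \<Rightarrow> real"
  assumes "2 \<le> n" "S \<subseteq> {0..n}" "0 < p"
    and q: "\<And>\<sigma>. \<sigma> \<in> cand_faces n \<Longrightarrow> p \<le> q \<sigma> \<and> q \<sigma> \<le> 1"
  shows "measure_pmf.prob (Pi_pmf (cand_faces n) False (\<lambda>\<sigma>. bernoulli_pmf (q \<sigma>)))
           (\<Inter>w\<in>{0..n} - S. {f. \<not> (\<forall>\<sigma>\<in>cone_faces S w. f \<sigma>)})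
         \<le> (1 - p ^ (card S + 1)) ^ (n + 1 - card S)"
proof -
  let ?\<Omega> = "Pi_pmf (cand_faces n) False (\<lambda>\<sigma>. bernoulli_pmf (q \<sigma>))"
  have fin: "finite (cand_faces n)"
    unfolding cand_faces_def by (rule finite_subset[of _ "Pow {0..n}"]) auto
  have finS: "finite S" using assms(2) finite_subset by blast
  have cone_sub: "cone_faces S w \<subseteq> cand_faces n" if "w \<in> {0..n}" for w
    using cone_faces_subset_cand_faces assms(1,2) that by simp
  have "p \<le> 1" using q[OF singleton_in_cand_faces[of n 0]] assms(1) by simp
  have factor: "measure_pmf.prob ?\<Omega> {f. \<not> (\<forall>\<sigma>\<in>cone_faces S w. f \<sigma>)} \<le> 1 - p ^ (card S + 1)"
    if "w \<in> {0..n}" for w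
  proof -
    have "p ^ (card S + 1) \<le> p ^ card (cone_faces S w)"
      using \<open>p \<le> 1\<close> assms(3) card_cone_faces_le[OF finS] by (intro power_decreasing) auto
    also have "\<dots> = (\<Prod>\<sigma>\<in>cone_faces S w. p)" by simp
    also have "\<dots> \<le> (\<Prod>\<sigma>\<in>cone_faces S w. q \<sigma>)"
      using cone_sub[OF that] q assms(3) by (intro prod_mono) force
    also have "\<dots> = measure_pmf.prob ?\<Omega> {f. \<forall>\<sigma>\<in>cone_faces S w. f \<sigma>}"
      by (rule Pi_pmf_bernoulli_prob_all[symmetric, OF fin cone_sub[OF that]])
        (use q assms(3) in force)
    finally show ?thesis
      using measure_pmf.prob_compl[of "{f. \<forall>\<sigma>\<in>cone_faces S w. f \<sigma>}" ?\<Omega>]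
      by (simp add: set_diff_eq)
  qed
  have "measure_pmf.prob ?\<Omega> (\<Inter>w\<in>{0..n} - S. {f. \<not> (\<forall>\<sigma>\<in>cone_faces S w. f \<sigma>)})
      = (\<Prod>w\<in>{0..n} - S. measure_pmf.prob ?\<Omega> {f. \<not> (\<forall>\<sigma>\<in>cone_faces S w. f \<sigma>)})"
    using fin cone_sub disjoint_family_on_mono[OF _ disjoint_family_cone_faces, of "{0..n} - S" S]
    by (intro Pi_pmf_prob_Inter_local_events[where B = "cone_faces S"]) auto
  also have "\<dots> \<le> (\<Prod>w\<in>{0..n} - S. 1 - p ^ (card S + 1))"
    using factor by (intro prod_mono) auto
  also have "\<dots> = (1 - p ^ (card S + 1)) ^ (n + 1 - card S)"
    using assms(2) finS by (simp add: card_Diff_subset)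
  finally show ?thesis .
qed

lemma one_minus_power_power_mono:
  fixes p :: real
  assumes "0 \<le> p" "p \<le> 1" "i \<le> j" "m \<le> l"
  shows "(1 - p ^ i) ^ l \<le> (1 - p ^ j) ^ m"
proof -
  have "p ^ j \<le> p ^ i" "p ^ i \<le> 1" "p ^ j \<le> 1"
    using assms by (auto intro: power_decreasing power_le_one)
  then have "(1 - p ^ i) ^ l \<le> (1 - p ^ j) ^ l"
    by (intro power_mono) auto
  also have "\<dots> \<le> (1 - p ^ j) ^ m"
    using \<open>p ^ j \<le> 1\<close> assms(1,4) by (intro power_decreasing) auto
  finally show ?thesis .
qed

lemma prob_star_nerve_contains_skeleton_ge:
  fixes q :: "nat set \<Rightarrow> real"
  assumes "2 \<le> n" "0 < p" "\<And>\<sigma>. \<sigma> \<in> cand_faces n \<Longrightarrow> p \<le> q \<sigma> \<and> q \<sigma> \<le> 1"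
  shows "1 - real (k + 2) * real (n + 1) ^ (k + 1) * (1 - p ^ (k + 2)) ^ (n - k)
           \<le> measure_pmf.prob (lower_hypergraph n q)
               {X. \<forall>S. S \<noteq> {} \<and> S \<subseteq> vertices (largest_complex X) \<and> card S \<le> k + 1
                      \<longrightarrow> S \<in> star_nerve (largest_complex X)}"
    (is "_ \<le> measure_pmf.prob _ ?good")
proof -
  let ?\<Omega> = "Pi_pmf (cand_faces n) False (\<lambda>\<sigma>. bernoulli_pmf (q \<sigma>))"
  define Sets where "Sets = {S. S \<subseteq> {0..n} \<and> card S \<le> k + 1}"
  define bad where "bad S = (\<Inter>w\<in>{0..n} - S. {f. \<not> (\<forall>\<sigma>\<in>cone_faces S w. f \<sigma>)})" for S
  have "p \<le> 1" using assms(3)[OF singleton_in_cand_faces[of n 0]] assms(1) by simp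
  have good: "- (\<Union>S\<in>Sets. bad S) \<subseteq> (\<lambda>f. {\<sigma> \<in> cand_faces n. f \<sigma>}) -` ?good"
  proof
    fix f assume f: "f \<in> - (\<Union>S\<in>Sets. bad S)"
    have "\<exists>w. cone_faces S w \<subseteq> {\<sigma> \<in> cand_faces n. f \<sigma>}"
      if "S \<subseteq> {0..n}" "card S \<le> k + 1" for S
    proof -
      have "f \<notin> bad S" using f that by (auto simp: Sets_def)
      then obtain w where "w \<in> {0..n}" "\<forall>\<sigma>\<in>cone_faces S w. f \<sigma>"
        by (auto simp: bad_def)
      then show ?thesis using cone_faces_subset_cand_faces[OF assms(1) that(1)] by auto
    qed
    then show "f \<in> (\<lambda>f. {\<sigma> \<in> cand_faces n. f \<sigma>}) -` ?good"
      using star_nerve_contains_skeleton_if_cones[of "{\<sigma> \<in> cand_faces n. f \<sigma>}" n k] by simp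
  qed
  have bad: "measure_pmf.prob ?\<Omega> (bad S) \<le> (1 - p ^ (k + 2)) ^ (n - k)" if "S \<in> Sets" for S
  proof -
    have S: "S \<subseteq> {0..n}" "card S \<le> k + 1" using that by (auto simp: Sets_def)
    have "measure_pmf.prob ?\<Omega> (bad S) \<le> (1 - p ^ (card S + 1)) ^ (n + 1 - card S)"
      unfolding bad_def by (rule prob_no_common_neighbour_le[OF assms(1) S(1) assms(2,3)])
    also have "\<dots> \<le> (1 - p ^ (k + 2)) ^ (n - k)"
      using S(2) assms(2) \<open>p \<le> 1\<close> by (intro one_minus_power_power_mono) auto
    finally show ?thesis .
  qed
  have "measure_pmf.prob ?\<Omega> (\<Union>S\<in>Sets. bad S) \<le> (\<Sum>S\<in>Sets. measure_pmf.prob ?\<Omega> (bad S))"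
    by (rule measure_pmf.finite_measure_subadditive_finite) (auto simp: Sets_def)
  also have "\<dots> \<le> real (card Sets) * (1 - p ^ (k + 2)) ^ (n - k)"
    using sum_mono[OF bad] by simp
  also have "\<dots> \<le> real (k + 2) * real (n + 1) ^ (k + 1) * (1 - p ^ (k + 2)) ^ (n - k)"
  proof (rule mult_right_mono)
    have "card Sets \<le> (k + 2) * (n + 1) ^ (k + 1)"
      using card_subsets_card_le[of "{0..n}" "k + 1"] by (simp add: Sets_def)
    then show "real (card Sets) \<le> real (k + 2) * real (n + 1) ^ (k + 1)"
      by (metis of_nat_le_iff of_nat_mult of_nat_power of_nat_add numeral_2_eq_2 of_nat_Suc)
    show "0 \<le> (1 - p ^ (k + 2)) ^ (n - k)"
      using \<open>p \<le> 1\<close> power_le_one[of p "k + 2"] assms(2) by simp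
  qed
  finally have "1 - real (k + 2) * real (n + 1) ^ (k + 1) * (1 - p ^ (k + 2)) ^ (n - k)
      \<le> measure_pmf.prob ?\<Omega> (- (\<Union>S\<in>Sets. bad S))"
    using measure_pmf.prob_compl[of "\<Union>S\<in>Sets. bad S" ?\<Omega>] by (simp add: Compl_eq_Diff_UNIV)
  also have "\<dots> \<le> measure_pmf.prob ?\<Omega> ((\<lambda>f. {\<sigma> \<in> cand_faces n. f \<sigma>}) -` ?good)"
    using good by (rule measure_pmf.finite_measure_mono) simp
  finally show ?thesis by (simp add: lower_hypergraph_def measure_map_pmf)
qed

lemma union_bound_term_le_exp:
  fixes p \<kappa> :: real
  assumes "0 < p" "p \<le> 1" "real k \<le> \<kappa>"
  shows "real (k + 2) * real (n + 1) ^ (k + 1) * (1 - p ^ (k + 2)) ^ (n - k)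
           \<le> (\<kappa> + 2) * real (n + 1) powr (\<kappa> + 1) * exp (- (p\<^sup>2 * p powr \<kappa>) * (real n - \<kappa>))"
proof -
  have "real (n + 1) ^ (k + 1) = real (n + 1) powr real (k + 1)"
    by (rule powr_realpow[symmetric]) simp
  also have "\<dots> \<le> real (n + 1) powr (\<kappa> + 1)"
    using assms(3) by (intro powr_mono) auto
  finally have second: "real (n + 1) ^ (k + 1) \<le> real (n + 1) powr (\<kappa> + 1)" .
  have "p\<^sup>2 * p powr \<kappa> = p powr (\<kappa> + 2)"
    using assms(1) by (simp add: powr_add powr_numeral mult.commute)
  also have "\<dots> \<le> p powr real (k + 2)"
    using assms by (intro powr_mono') auto
  also have "\<dots> = p ^ (k + 2)"
    using assms(1) by (rule powr_realpow)
  finally have y: "p\<^sup>2 * p powr \<kappa> \<le> p ^ (k + 2)" .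
  have "(1 - p ^ (k + 2)) ^ (n - k) \<le> exp (- (p ^ (k + 2))) ^ (n - k)"
    using assms(1,2) power_le_one[of p "k + 2"] exp_ge_add_one_self[of "- (p ^ (k + 2))"]
    by (intro power_mono) auto
  also have "\<dots> = exp (- (p ^ (k + 2) * real (n - k)))"
    by (simp add: exp_of_nat_mult[symmetric] mult.commute)
  also have "\<dots> \<le> exp (- (p\<^sup>2 * p powr \<kappa>) * (real n - \<kappa>))"
  proof -
    have "p\<^sup>2 * p powr \<kappa> * (real n - \<kappa>) \<le> p\<^sup>2 * p powr \<kappa> * real (n - k)"
      using assms(3) by (intro mult_left_mono) auto
    also have "\<dots> \<le> p ^ (k + 2) * real (n - k)"
      using y by (rule mult_right_mono) simp
    finally show ?thesis by simp
  qed
  finally have third: "(1 - p ^ (k + 2)) ^ (n - k) \<le> exp (- (p\<^sup>2 * p powr \<kappa>) * (real n - \<kappa>))" .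
  have "0 \<le> (1 - p ^ (k + 2)) ^ (n - k)"
    using assms(1,2) power_le_one[of p "k + 2"] by simp
  then show ?thesis
    using assms(3) second third by (intro mult_mono) auto
qed

lemma union_bound_term_tendsto_zero:
  fixes p \<alpha> :: real and k :: "nat \<Rightarrow> nat"
  assumes "0 < p" "p < 1" "0 < \<alpha>" "\<alpha> < 1"
    and k: "eventually (\<lambda>n. real (k n) \<le> \<alpha> * log (1 / p) (real n)) sequentially"
  shows "(\<lambda>n. real (k n + 2) * real (n + 1) ^ (k n + 1) * (1 - p ^ (k n + 2)) ^ (n - k n))
           \<longlonglongrightarrow> 0"
proof -
  define g where "g x = (\<alpha> * log (1 / p) x + 2) * (x + 1) powr (\<alpha> * log (1 / p) x + 1)
    * exp (- (p\<^sup>2 * x powr (- \<alpha>)) * (x - \<alpha> * log (1 / p) x))" for x :: real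
  have "(g \<longlongrightarrow> 0) at_top"
    unfolding g_def using assms(1-4) by real_asymp
  then have g: "(\<lambda>n. g (real n)) \<longlonglongrightarrow> 0"
    by (rule filterlim_compose[OF _ filterlim_real_sequentially])
  have powr_log: "p powr (\<alpha> * log (1 / p) x) = x powr (- \<alpha>)" if "0 < x" for x
    using assms(1,2) that by (simp add: powr_def log_def ln_div)
  show ?thesis
  proof (rule tendsto_sandwich[OF _ _ tendsto_const g])
    show "eventually (\<lambda>n. 0 \<le> real (k n + 2) * real (n + 1) ^ (k n + 1)
                                 * (1 - p ^ (k n + 2)) ^ (n - k n)) sequentially"
      using assms(1,2) power_le_one[of p]
      by (intro always_eventually allI mult_nonneg_nonneg zero_le_power) (auto simp del: power_Suc)
    show "eventually (\<lambda>n. real (k n + 2) * real (n + 1) ^ (k n + 1) * (1 - p ^ (k n + 2)) ^ (n - k n)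
                           \<le> g (real n)) sequentially"
      using k eventually_gt_at_top[of "0::nat"]
    proof eventually_elim
      case (elim n)
      then show ?case
        using union_bound_term_le_exp[OF assms(1) _ elim(1), of n] assms(2) powr_log[of "real n"]
        by (simp add: g_def add.commute)
    qed
  qed
qed

theorem corollary6p4:
  fixes p P \<alpha> :: real and ps :: "nat \<Rightarrow> nat set \<Rightarrow> real"
  assumes "0 < p" "p \<le> P" "P < 1"
    and "\<And>n \<sigma>. \<sigma> \<in> cand_faces n \<Longrightarrow> p \<le> ps n \<sigma> \<and> ps n \<sigma> \<le> P"
    and "0 < \<alpha>" "\<alpha> < 1"
  shows "(\<lambda>n. measure_pmf.prob (lower_hypergraph n (ps n))
            {X. let Y = largest_complex X;
                    k = nat \<lfloor>\<alpha> * log (1 / p) (real n)\<rfloor>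
                in \<forall>S. S \<noteq> {} \<and> S \<subseteq> vertices Y \<and> card S \<le> k + 1
                        \<longrightarrow> S \<in> star_nerve Y})
         \<longlonglongrightarrow> 1"
proof -
  define k where "k n = nat \<lfloor>\<alpha> * log (1 / p) (real n)\<rfloor>" for n :: nat
  define T where "T n = real (k n + 2) * real (n + 1) ^ (k n + 1) * (1 - p ^ (k n + 2)) ^ (n - k n)"
    for n
  have "p < 1" using assms(2,3) by linarith
  have k_le: "real (k n) \<le> \<alpha> * log (1 / p) (real n)" if "0 < n" for n
  proof -
    have "0 \<le> log (1 / p) (real n)" using assms(1) \<open>p < 1\<close> that by simp
    then show ?thesis using assms(5) by (simp add: k_def)
  qed
  have T: "T \<longlonglongrightarrow> 0"
    unfolding T_def using eventually_mono[OF eventually_gt_at_top[of "0::nat"] k_le]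
    by (rule union_bound_term_tendsto_zero[OF assms(1) \<open>p < 1\<close> assms(5,6)])
  have lower: "(\<lambda>n. 1 - T n) \<longlonglongrightarrow> 1"
    using tendsto_diff[OF tendsto_const[of "1::real"] T] by simp
  have "1 - T n \<le> measure_pmf.prob (lower_hypergraph n (ps n))
          {X. \<forall>S. S \<noteq> {} \<and> S \<subseteq> vertices (largest_complex X) \<and> card S \<le> k n + 1
                 \<longrightarrow> S \<in> star_nerve (largest_complex X)}" if "2 \<le> n" for n
    unfolding T_def using assms(3,4)
    by (intro prob_star_nerve_contains_skeleton_ge[OF that assms(1)]) fastforce
  then show ?thesis
    unfolding Let_def k_def[symmetric]
    by (intro tendsto_sandwich[OF eventually_mono[OF eventually_ge_at_top[of 2]] _ lower tendsto_const])
      simp_all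
qed

end
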